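(* Let $n\ge 2$ and let the billiard domain $\mathcal{B}\subset\mathbb{R}^n$ be the region between two parallel affine hyperplanes. Then every trajectory of the no-slip billiard in $\mathcal{B}$ whose initial center-of-mass velocity is not parallel to the hyperplanes is bounded (the position of the particle's center of mass remains in a bounded set). Trajectories remain bounded if a constant force is applied to the particle's center of mass along any direction parallel to the hyperplanes.
   Context: The moving particle is a ball of radius $r>0$ with a rotationally symmetric mass distribution of total mass $m$ whose second-moment matrix per unit mass is $\lambda I$, $\lambda=(r\gamma)^2/2$, $\gamma>0$. Put $c=\frac{1-\gamma^2}{1+\gamma^2}$, $s=\frac{2\gamma}{1+\gamma^2}$, and for $a,b\in\mathbb{R}^n$ let $a\wedge b\in\mathfrak{so}(n)$ be $(a\wedge b)x=(a\cdot x)b-(b\cdot x)a$. The billiard domain $\mathcal{B}$ is the set of admissible positions of the particle's center; at a boundary point $a$, $\nu_a$ is the unit normal pointing into $\mathcal{B}$. A state is $(a,u,U)$ with $u$ the center-of-mass velocity and $U\in\mathfrak{so}(n)$ the angular velocity matrix (a material point at $x$ has velocity $U(x-a)+u$). A no-slip billiard trajectory: between collisions $U$ is constant and the center of mass moves freely (or with constant acceleration $F/m$ under a constant force $F$); at a collision at $a$ the pre-collision $(u,U)$ is replaced by $C_a(u,U)=\big(cu-\tfrac{s}{\gamma}(u\cdot\nu_a)\nu_a+s\gamma rU\nu_a,\ \tfrac{s}{\gamma r}\nu_a\wedge u+U-\tfrac{s}{\gamma}\nu_a\wedge U\nu_a\big)$. *)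

theory Defs
  imports "HOL-Analysis.Analysis"
begin

text \<open>Wedge product: (a \<and> b) x = (a . x) b - (b . x) a, as an n x n matrix.\<close>
definition wedge :: "real^'n \<Rightarrow> real^'n \<Rightarrow> real^'n^'n" where
  "wedge a b = (\<chi> i j. b$i * a$j - a$i * b$j)"

definition nsc :: "real \<Rightarrow> real" where "nsc \<gamma> = (1 - \<gamma>^2) / (1 + \<gamma>^2)"
definition nss :: "real \<Rightarrow> real" where "nss \<gamma> = (2 * \<gamma>) / (1 + \<gamma>^2)"

definition collision ::
  "real \<Rightarrow> real \<Rightarrow> real^'n \<Rightarrow> (real^'n) \<times> (real^'n^'n) \<Rightarrow> (real^'n) \<times> (real^'n^'n)" where
  "collision \<gamma> r \<nu> uU = (let u = fst uU; U = snd uU in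
     (nsc \<gamma> *\<^sub>R u - (nss \<gamma> / \<gamma> * (u \<bullet> \<nu>)) *\<^sub>R \<nu> + (nss \<gamma> * \<gamma> * r) *\<^sub>R (U *v \<nu>),
      (nss \<gamma> / (\<gamma> * r)) *\<^sub>R wedge \<nu> u + U - (nss \<gamma> / \<gamma>) *\<^sub>R wedge \<nu> (U *v \<nu>)))"

definition slab :: "real^'n \<Rightarrow> real \<Rightarrow> real \<Rightarrow> (real^'n) set" where
  "slab e \<alpha> \<beta> = {x. \<alpha> \<le> x \<bullet> e \<and> x \<bullet> e \<le> \<beta>}"

definition slab_normal :: "real^'n \<Rightarrow> real \<Rightarrow> real \<Rightarrow> real^'n \<Rightarrow> real^'n" where
  "slab_normal e \<alpha> \<beta> a = (if a \<bullet> e = \<alpha> then e else - e)"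

definition flight :: "real \<Rightarrow> real^'n \<Rightarrow> real^'n \<Rightarrow> real^'n \<Rightarrow> real \<Rightarrow> real^'n" where
  "flight m F a u \<tau> = a + \<tau> *\<^sub>R u + (\<tau>^2 / (2 * m)) *\<^sub>R F"

text \<open>A no-slip billiard trajectory in the slab: collision times t (t 0 = 0 is the initial
  time), states (a k, u k, U k) right after the k-th collision (k = 0: initial state).\<close>
definition noslip_traj ::
  "real \<Rightarrow> real^'n \<Rightarrow> real \<Rightarrow> real \<Rightarrow> real^'n \<Rightarrow> real \<Rightarrow> real \<Rightarrow>
   (nat \<Rightarrow> real) \<Rightarrow> (nat \<Rightarrow> real^'n) \<Rightarrow> (nat \<Rightarrow> real^'n) \<Rightarrow> (nat \<Rightarrow> real^'n^'n) \<Rightarrow> bool" where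
  "noslip_traj m F \<gamma> r e \<alpha> \<beta> t a u U \<longleftrightarrow>
     t 0 = 0 \<and> (\<forall>k. t k < t (Suc k)) \<and>
     a 0 \<in> slab e \<alpha> \<beta> \<and> transpose (U 0) = - U 0 \<and>
     (\<forall>k. \<forall>\<tau>. 0 \<le> \<tau> \<and> \<tau> \<le> t (Suc k) - t k \<longrightarrow> flight m F (a k) (u k) \<tau> \<in> slab e \<alpha> \<beta>) \<and>
     (\<forall>k. a (Suc k) = flight m F (a k) (u k) (t (Suc k) - t k) \<and>
          (a (Suc k) \<bullet> e = \<alpha> \<or> a (Suc k) \<bullet> e = \<beta>) \<and>
          (u (Suc k), U (Suc k)) =
            collision \<gamma> r (slab_normal e \<alpha> \<beta> (a (Suc k)))
              (u k + ((t (Suc k) - t k) / m) *\<^sub>R F, U k))"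

end

theory Submission
  imports Defs
begin

text \<open>
  The normal component of the velocity only changes sign at a collision, and the force is
  parallel to the walls, so after the first collision the particle shuttles between the two
  walls with the constant crossing time \<open>T = (\<beta> - \<alpha>) / \<bar>u\<^sub>0 \<bullet> e\<bar>\<close>.
  Along this schedule two quantities survive each crossing followed by a collision:
  the energy \<open>\<bar>u\<bar>\<^sup>2 + (\<gamma> r)\<^sup>2 \<bar>U \<nu>\<bar>\<^sup>2 - (2/m) F \<bullet> a\<close>, and the point
  \<open>a + (T/2) (u - r U \<nu>) + (T\<^sup>2/4m) F\<close>, because a no-slip collision reverses the velocity
  \<open>u - r U \<nu>\<close> of the material point touching the wall.  Eliminating the position between
  the two invariants gives a quadratic inequality bounding \<open>u\<close> and \<open>U \<nu>\<close>, hence the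
  position, hence every flight.
\<close>

lemma wedge_mult_vec: "wedge a b *v x = (a \<bullet> x) *\<^sub>R b - (b \<bullet> x) *\<^sub>R a"
  by (simp add: vec_eq_iff matrix_vector_mult_def wedge_def inner_vec_def
      sum_distrib_left sum_distrib_right sum_subtractf algebra_simps)

lemma transpose_wedge: "transpose (wedge a b) = - wedge a b"
  by (simp add: vec_eq_iff transpose_def wedge_def)

lemma transpose_add: "transpose (A + B) = transpose A + transpose (B::'a::semiring_1^'n^'m)"
  by (simp add: vec_eq_iff transpose_def)

lemma transpose_diff: "transpose (A - B) = transpose A - transpose (B::'a::ring_1^'n^'m)"
  by (simp add: vec_eq_iff transpose_def)

lemma skew_mult_vec_inner_self:
  fixes A :: "real^'n^'n"
  assumes "transpose A = - A"
  shows "(A *v x) \<bullet> x = 0"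
proof -
  have "(A *v x) \<bullet> x = (x v* A) \<bullet> x"
    by (simp add: dot_lmul_matrix[symmetric] inner_commute)
  also have "x v* A = transpose A *v x"
    by simp
  also have "\<dots> = - (A *v x)"
    using assms by (simp add: vec_eq_iff matrix_vector_mult_def sum_negf)
  finally show ?thesis by simp
qed

lemma matrix_vector_mult_uminus_right: "(A::real^'n^'m) *v (- x) = - (A *v x)"
  by (metis matrix_vector_mult_scaleR scaleR_minus1_left)

lemma one_plus_square_pos: "0 < 1 + \<gamma>\<^sup>2" for \<gamma> :: real
  by (simp add: add_pos_nonneg)

lemma nsc_minus_nss_div: "\<gamma> \<noteq> 0 \<Longrightarrow> nsc \<gamma> - nss \<gamma> / \<gamma> = -1"
  using one_plus_square_pos[of \<gamma>]
  by (simp add: nsc_def nss_def divide_simps)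

lemma nss_mult_plus_nsc: "nss \<gamma> * \<gamma> + nsc \<gamma> = 1"
  using one_plus_square_pos[of \<gamma>]
  by (simp add: nsc_def nss_def divide_simps) algebra

lemma nsc_sq_plus_nss_sq: "nsc \<gamma> ^ 2 + nss \<gamma> ^ 2 = 1"
  using one_plus_square_pos[of \<gamma>] by (simp add: nsc_def nss_def divide_simps) algebra

lemma norm_reflection_pair:
  fixes x y :: "'a::real_inner"
  assumes "c\<^sup>2 + s\<^sup>2 = 1"
  shows "(norm (c *\<^sub>R x + s *\<^sub>R y))\<^sup>2 + (norm (s *\<^sub>R x - c *\<^sub>R y))\<^sup>2 = (norm x)\<^sup>2 + (norm y)\<^sup>2"
proof -
  have "(norm (c *\<^sub>R x + s *\<^sub>R y))\<^sup>2 + (norm (s *\<^sub>R x - c *\<^sub>R y))\<^sup>2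
      = (c\<^sup>2 + s\<^sup>2) * ((norm x)\<^sup>2 + (norm y)\<^sup>2)"
    unfolding power2_norm_eq_inner
    by (simp add: inner_add_left inner_add_right inner_diff_left inner_diff_right
        inner_commute[of y x] algebra_simps power2_eq_square)
  then show ?thesis using assms by simp
qed

lemma norm_normal_plus_tangential:
  fixes \<nu> z :: "'a::real_inner"
  assumes "\<nu> \<bullet> \<nu> = 1" "z \<bullet> \<nu> = 0"
  shows "(norm (d *\<^sub>R \<nu> + z))\<^sup>2 = d\<^sup>2 + (norm z)\<^sup>2"
  using assms unfolding power2_norm_eq_inner
  by (simp add: inner_add_left inner_add_right inner_commute[of \<nu> z] power2_eq_square)

text \<open>
  Write \<open>x\<close> for the part of \<open>u\<close> tangent to the wall and \<open>y = \<gamma> r U \<nu>\<close>.  The collision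
  reverses the normal part of \<open>u\<close> and maps the tangential pair \<open>(x, y)\<close> to
  \<open>(c x + s y, s x - c y)\<close>, a reflection since \<open>c\<^sup>2 + s\<^sup>2 = 1\<close>.
\<close>

lemma collision_fst:
  assumes "\<gamma> \<noteq> 0"
  shows "fst (collision \<gamma> r \<nu> (u, V)) =
    - (u \<bullet> \<nu>) *\<^sub>R \<nu> + nsc \<gamma> *\<^sub>R (u - (u \<bullet> \<nu>) *\<^sub>R \<nu>) + nss \<gamma> *\<^sub>R ((\<gamma> * r) *\<^sub>R (V *v \<nu>))"
proof -
  have "nss \<gamma> / \<gamma> = nsc \<gamma> + 1"
    using nsc_minus_nss_div[OF assms] by simp
  then show ?thesis
    by (simp add: collision_def algebra_simps)
qed

lemma collision_snd_mult_normal: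
  assumes "\<gamma> \<noteq> 0" "r \<noteq> 0" "\<nu> \<bullet> \<nu> = 1" "(V *v \<nu>) \<bullet> \<nu> = 0"
  shows "(\<gamma> * r) *\<^sub>R (snd (collision \<gamma> r \<nu> (u, V)) *v \<nu>) =
    nss \<gamma> *\<^sub>R (u - (u \<bullet> \<nu>) *\<^sub>R \<nu>) - nsc \<gamma> *\<^sub>R ((\<gamma> * r) *\<^sub>R (V *v \<nu>))"
proof -
  have "snd (collision \<gamma> r \<nu> (u, V)) *v \<nu> =
      (nss \<gamma> / (\<gamma> * r)) *\<^sub>R (u - (u \<bullet> \<nu>) *\<^sub>R \<nu>) + (1 - nss \<gamma> / \<gamma>) *\<^sub>R (V *v \<nu>)"
    using assms(3,4)
    by (simp add: collision_def wedge_mult_vec matrix_vector_mult_add_rdistrib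
        matrix_vector_mult_diff_rdistrib scaleR_matrix_vector_assoc[symmetric]
        inner_commute[of \<nu> u] inner_commute[of \<nu> "V *v \<nu>"] scaleR_diff_left)
  moreover have "nss \<gamma> / \<gamma> = nsc \<gamma> + 1"
    using nsc_minus_nss_div[OF assms(1)] by simp
  ultimately show ?thesis
    using assms(1,2) by (simp add: scaleR_diff_right)
qed

lemma collision_snd_skew:
  assumes "transpose V = - V"
  shows "transpose (snd (collision \<gamma> r \<nu> (u, V))) = - snd (collision \<gamma> r \<nu> (u, V))"
  using assms by (simp add: collision_def transpose_add transpose_diff transpose_scalar
      transpose_wedge)

lemma collision_normal_velocity:
  assumes "\<gamma> \<noteq> 0" "\<nu> \<bullet> \<nu> = 1" "(V *v \<nu>) \<bullet> \<nu> = 0"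
  shows "fst (collision \<gamma> r \<nu> (u, V)) \<bullet> \<nu> = - (u \<bullet> \<nu>)"
  using assms by (simp add: collision_fst inner_add_left inner_diff_left)

text \<open>\<open>u - r U \<nu>\<close> is the velocity of the material point \<open>a - r \<nu>\<close> touching the wall.\<close>

lemma collision_contact_velocity:
  assumes "\<gamma> \<noteq> 0" "r \<noteq> 0" "\<nu> \<bullet> \<nu> = 1" "(V *v \<nu>) \<bullet> \<nu> = 0"
  shows "fst (collision \<gamma> r \<nu> (u, V)) - r *\<^sub>R (snd (collision \<gamma> r \<nu> (u, V)) *v \<nu>)
    = - (u - r *\<^sub>R (V *v \<nu>))"
proof -
  define x where "x = u - (u \<bullet> \<nu>) *\<^sub>R \<nu>"
  have "r *\<^sub>R (snd (collision \<gamma> r \<nu> (u, V)) *v \<nu>)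
      = (1 / \<gamma>) *\<^sub>R ((\<gamma> * r) *\<^sub>R (snd (collision \<gamma> r \<nu> (u, V)) *v \<nu>))"
    using assms(1) by simp
  then have "fst (collision \<gamma> r \<nu> (u, V)) - r *\<^sub>R (snd (collision \<gamma> r \<nu> (u, V)) *v \<nu>)
      = - (u \<bullet> \<nu>) *\<^sub>R \<nu> + (nsc \<gamma> - nss \<gamma> / \<gamma>) *\<^sub>R x + (nss \<gamma> * \<gamma> + nsc \<gamma>) *\<^sub>R (r *\<^sub>R (V *v \<nu>))"
    using assms
    by (simp add: collision_fst collision_snd_mult_normal x_def[symmetric] algebra_simps)
  also have "\<dots> = - (u - r *\<^sub>R (V *v \<nu>))"
    using assms(1) by (simp add: nsc_minus_nss_div nss_mult_plus_nsc x_def)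
  finally show ?thesis .
qed

lemma collision_energy:
  assumes "\<gamma> \<noteq> 0" "r \<noteq> 0" "\<nu> \<bullet> \<nu> = 1" "(V *v \<nu>) \<bullet> \<nu> = 0"
  shows "(norm (fst (collision \<gamma> r \<nu> (u, V))))\<^sup>2
      + (norm ((\<gamma> * r) *\<^sub>R (snd (collision \<gamma> r \<nu> (u, V)) *v \<nu>)))\<^sup>2
    = (norm u)\<^sup>2 + (norm ((\<gamma> * r) *\<^sub>R (V *v \<nu>)))\<^sup>2"
proof -
  define x where "x = u - (u \<bullet> \<nu>) *\<^sub>R \<nu>"
  define y where "y = (\<gamma> * r) *\<^sub>R (V *v \<nu>)"
  have x_perp: "x \<bullet> \<nu> = 0" and y_perp: "y \<bullet> \<nu> = 0"
    using assms(3,4) by (simp_all add: x_def y_def inner_diff_left)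
  have "(norm (fst (collision \<gamma> r \<nu> (u, V))))\<^sup>2
      = (u \<bullet> \<nu>)\<^sup>2 + (norm (nsc \<gamma> *\<^sub>R x + nss \<gamma> *\<^sub>R y))\<^sup>2"
    using norm_normal_plus_tangential[OF assms(3), of "nsc \<gamma> *\<^sub>R x + nss \<gamma> *\<^sub>R y" "- (u \<bullet> \<nu>)"]
      x_perp y_perp
    unfolding collision_fst[OF assms(1)] x_def[symmetric] y_def[symmetric]
    by (simp add: algebra_simps)
  moreover have "(norm ((\<gamma> * r) *\<^sub>R (snd (collision \<gamma> r \<nu> (u, V)) *v \<nu>)))\<^sup>2
      = (norm (nss \<gamma> *\<^sub>R x - nsc \<gamma> *\<^sub>R y))\<^sup>2"
    by (simp add: collision_snd_mult_normal[OF assms] x_def y_def)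
  moreover have "(norm u)\<^sup>2 = (u \<bullet> \<nu>)\<^sup>2 + (norm x)\<^sup>2"
    using norm_normal_plus_tangential[OF assms(3) x_perp, of "u \<bullet> \<nu>"] by (simp add: x_def)
  ultimately show ?thesis
    using norm_reflection_pair[OF nsc_sq_plus_nss_sq, where x=x and y=y] by (simp add: y_def)
qed

lemma flight_inner_normal:
  "F \<bullet> e = 0 \<Longrightarrow> flight m F a u \<tau> \<bullet> e = a \<bullet> e + \<tau> * (u \<bullet> e)"
  by (simp add: flight_def inner_add_left)

lemma flight_energy:
  assumes "m \<noteq> 0"
  shows "(norm (u + (\<tau> / m) *\<^sub>R F))\<^sup>2 - (2 / m) * (F \<bullet> flight m F a u \<tau>)
    = (norm u)\<^sup>2 - (2 / m) * (F \<bullet> a)"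
  using assms unfolding power2_norm_eq_inner
  by (simp add: flight_def inner_add_left inner_add_right inner_commute field_simps
      power2_eq_square)

lemma norm_flight_le:
  assumes "m > 0" "0 \<le> \<tau>" "\<tau> \<le> d"
  shows "norm (flight m F a u \<tau>) \<le> norm a + d * norm u + d\<^sup>2 / (2 * m) * norm F"
proof -
  have "norm (flight m F a u \<tau>) \<le> norm a + norm (\<tau> *\<^sub>R u) + norm ((\<tau>\<^sup>2 / (2 * m)) *\<^sub>R F)"
    unfolding flight_def by (meson norm_triangle_le norm_triangle_ineq order_refl add_mono)
  also have "norm (\<tau> *\<^sub>R u) \<le> d * norm u"
    using assms by (simp add: mult_right_mono)
  also have "norm ((\<tau>\<^sup>2 / (2 * m)) *\<^sub>R F) \<le> d\<^sup>2 / (2 * m) * norm F"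
    using assms by (simp add: mult_right_mono divide_right_mono power_mono)
  finally show ?thesis by simp
qed

lemma le_of_square_le_linear:
  fixes x K A :: real
  assumes "0 \<le> A" "x\<^sup>2 \<le> K + A * x"
  shows "x \<le> 1 + \<bar>K\<bar> + A"
proof (cases "x \<le> 1")
  case False
  then have "x * x \<le> (\<bar>K\<bar> + A) * x"
    using assms(2) mult_right_mono[of 1 x "\<bar>K\<bar>"]
    by (simp add: power2_eq_square algebra_simps)
  then show ?thesis using False by simp
qed (use assms in auto)

locale slab_billiard =
  fixes m \<gamma> r \<alpha> \<beta> :: real and e F :: "real^'n"
    and t :: "nat \<Rightarrow> real" and a u :: "nat \<Rightarrow> real^'n" and U :: "nat \<Rightarrow> real^'n^'n"
  assumes m_pos: "m > 0" and r_pos: "r > 0" and \<gamma>_pos: "\<gamma> > 0"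
    and e_unit: "norm e = 1" and \<alpha>_less_\<beta>: "\<alpha> < \<beta>"
    and force_parallel: "F \<bullet> e = 0"
    and trajectory: "noslip_traj m F \<gamma> r e \<alpha> \<beta> t a u U"
begin

definition normal :: "nat \<Rightarrow> real^'n" where
  "normal k = slab_normal e \<alpha> \<beta> (a k)"

definition spin :: "nat \<Rightarrow> real^'n" where
  "spin k = U k *v normal k"

lemma t_less_Suc: "t k < t (Suc k)"
  using trajectory by (simp add: noslip_traj_def)

lemma a_Suc: "a (Suc k) = flight m F (a k) (u k) (t (Suc k) - t k)"
  using trajectory by (simp add: noslip_traj_def)

lemma a_Suc_on_wall: "a (Suc k) \<bullet> e = \<alpha> \<or> a (Suc k) \<bullet> e = \<beta>"
  using trajectory unfolding noslip_traj_def by blast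

lemma u_U_Suc:
  "(u (Suc k), U (Suc k)) =
     collision \<gamma> r (normal (Suc k)) (u k + ((t (Suc k) - t k) / m) *\<^sub>R F, U k)"
  using trajectory by (simp add: noslip_traj_def normal_def)

lemma U_skew: "transpose (U k) = - U k"
proof (induction k)
  case 0
  then show ?case using trajectory by (simp add: noslip_traj_def)
next
  case (Suc k)
  then show ?case
    using collision_snd_skew u_U_Suc[of k] by (metis snd_conv)
qed

lemma normal_cases: "normal k = e \<or> normal k = - e"
  by (simp add: normal_def slab_normal_def)

lemma normal_inner_self: "normal k \<bullet> normal k = 1"
  using normal_cases[of k] e_unit by (auto simp: norm_eq_1)

lemma force_perp_normal: "F \<bullet> normal k = 0"
  using normal_cases[of k] force_parallel by auto

lemma U_normal_perp: "(U k *v normal j) \<bullet> normal j = 0"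
  using skew_mult_vec_inner_self[OF U_skew] .

lemma normal_velocity_Suc: "u (Suc k) \<bullet> e = - (u k \<bullet> e)"
proof -
  let ?\<nu> = "normal (Suc k)"
  have "u (Suc k) \<bullet> ?\<nu> = - ((u k + ((t (Suc k) - t k) / m) *\<^sub>R F) \<bullet> ?\<nu>)"
    using u_U_Suc[of k] collision_normal_velocity[OF _ normal_inner_self U_normal_perp] \<gamma>_pos
    by (metis fst_conv less_irrefl)
  also have "\<dots> = - (u k \<bullet> ?\<nu>)"
    by (simp add: inner_add_left force_perp_normal)
  finally show ?thesis
    using normal_cases[of "Suc k"] by auto
qed

lemma normal_speed_eq: "\<bar>u k \<bullet> e\<bar> = \<bar>u 0 \<bullet> e\<bar>"
  by (induction k) (simp_all add: normal_velocity_Suc)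

end

locale transversal_slab_billiard = slab_billiard +
  assumes transversal: "u 0 \<bullet> e \<noteq> 0"
begin

definition crossing_time :: real where
  "crossing_time = (\<beta> - \<alpha>) / \<bar>u 0 \<bullet> e\<bar>"

lemma crossing_time_pos: "crossing_time > 0"
  using \<alpha>_less_\<beta> transversal by (simp add: crossing_time_def)

lemma slab_crossing:
  "t (Suc (Suc k)) - t (Suc k) = crossing_time \<and> normal (Suc (Suc k)) = - normal (Suc k)"
proof -
  define j where "j = Suc k"
  define D where "D = t (Suc j) - t j"
  have D_pos: "D > 0"
    using t_less_Suc[of j] by (simp add: D_def)
  have displacement: "a (Suc j) \<bullet> e - a j \<bullet> e = D * (u j \<bullet> e)"
    using a_Suc[of j] flight_inner_normal[OF force_parallel] by (simp add: D_def)
  moreover have "u j \<bullet> e \<noteq> 0"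
    using normal_speed_eq[of j] transversal by auto
  ultimately have "a (Suc j) \<bullet> e \<noteq> a j \<bullet> e"
    using D_pos by (metis eq_iff_diff_eq_0 mult_eq_0_iff less_irrefl)
  then have walls: "(a j \<bullet> e = \<alpha> \<and> a (Suc j) \<bullet> e = \<beta>) \<or> (a j \<bullet> e = \<beta> \<and> a (Suc j) \<bullet> e = \<alpha>)"
    using a_Suc_on_wall[of k] a_Suc_on_wall[of j] by (auto simp: j_def)
  then have "\<bar>D * (u j \<bullet> e)\<bar> = \<beta> - \<alpha>"
    using displacement \<alpha>_less_\<beta> by auto
  then have "D * \<bar>u 0 \<bullet> e\<bar> = \<beta> - \<alpha>"
    using D_pos normal_speed_eq[of j] by (simp add: abs_mult)
  then have "D = crossing_time"
    using transversal by (simp add: crossing_time_def field_simps)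
  moreover have "normal (Suc j) = - normal j"
    using walls \<alpha>_less_\<beta> by (auto simp: normal_def slab_normal_def)
  ultimately show ?thesis
    by (simp add: D_def j_def)
qed

lemma crossing_step:
  shows "a (Suc (Suc k)) = flight m F (a (Suc k)) (u (Suc k)) crossing_time"
    and "(u (Suc (Suc k)), U (Suc (Suc k))) = collision \<gamma> r (normal (Suc (Suc k)))
           (u (Suc k) + (crossing_time / m) *\<^sub>R F, U (Suc k))"
    and "U (Suc k) *v normal (Suc (Suc k)) = - spin (Suc k)"
  using a_Suc[of "Suc k"] u_U_Suc[of "Suc k"] slab_crossing[of k]
  by (simp_all add: spin_def matrix_vector_mult_uminus_right)

definition anchor :: "nat \<Rightarrow> _" where
  "anchor k = a k + (crossing_time / 2) *\<^sub>R (u k - r *\<^sub>R spin k)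
    + (crossing_time\<^sup>2 / (4 * m)) *\<^sub>R F"

definition energy :: "nat \<Rightarrow> real" where
  "energy k = (norm (u k))\<^sup>2 + (norm ((\<gamma> * r) *\<^sub>R spin k))\<^sup>2 - (2 / m) * (F \<bullet> a k)"

lemma anchor_Suc_Suc: "anchor (Suc (Suc k)) = anchor (Suc k)"
proof -
  define T where "T = crossing_time"
  have "u (Suc (Suc k)) - r *\<^sub>R spin (Suc (Suc k))
      = - (u (Suc k) + (T / m) *\<^sub>R F - r *\<^sub>R (U (Suc k) *v normal (Suc (Suc k))))"
    using collision_contact_velocity[OF _ _ normal_inner_self U_normal_perp] \<gamma>_pos r_pos
      crossing_step(2)[of k]
    unfolding spin_def T_def by (metis fst_conv snd_conv less_irrefl)
  also have "\<dots> = - (u (Suc k) + (T / m) *\<^sub>R F + r *\<^sub>R spin (Suc k))"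
    by (simp add: crossing_step(3))
  finally have contact: "u (Suc (Suc k)) - r *\<^sub>R spin (Suc (Suc k))
      = - (u (Suc k) + (T / m) *\<^sub>R F + r *\<^sub>R spin (Suc k))" .
  show ?thesis
    using m_pos
    unfolding anchor_def T_def[symmetric] crossing_step(1)[of k, folded T_def] contact
    by (simp add: vec_eq_iff flight_def field_simps power2_eq_square)
qed

lemma energy_Suc_Suc: "energy (Suc (Suc k)) = energy (Suc k)"
proof -
  define T where "T = crossing_time"
  define v where "v = u (Suc k) + (T / m) *\<^sub>R F"
  have "(norm (u (Suc (Suc k))))\<^sup>2 + (norm ((\<gamma> * r) *\<^sub>R spin (Suc (Suc k))))\<^sup>2
      = (norm v)\<^sup>2 + (norm ((\<gamma> * r) *\<^sub>R (U (Suc k) *v normal (Suc (Suc k)))))\<^sup>2"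
    using collision_energy[OF _ _ normal_inner_self U_normal_perp] \<gamma>_pos r_pos
      crossing_step(2)[of k]
    unfolding spin_def T_def v_def by (metis fst_conv snd_conv less_irrefl)
  also have "\<dots> = (norm v)\<^sup>2 + (norm ((\<gamma> * r) *\<^sub>R spin (Suc k)))\<^sup>2"
    by (simp add: crossing_step(3))
  finally show ?thesis
    using flight_energy[of m "u (Suc k)" T F "a (Suc k)"] m_pos
    unfolding energy_def crossing_step(1)[of k, folded T_def] v_def by simp
qed

lemma anchor_eq: "anchor (Suc k) = anchor 1"
  by (induction k) (simp_all add: anchor_Suc_Suc)

lemma energy_eq: "energy (Suc k) = energy 1"
  by (induction k) (simp_all add: energy_Suc_Suc)

lemma a_Suc_eq_anchor:
  "a (Suc k) = anchor 1 - (crossing_time / 2) *\<^sub>R u (Suc k)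
     + (crossing_time / (2 * \<gamma>)) *\<^sub>R ((\<gamma> * r) *\<^sub>R spin (Suc k))
     - (crossing_time\<^sup>2 / (4 * m)) *\<^sub>R F"
  using anchor_eq[of k] \<gamma>_pos by (simp add: anchor_def algebra_simps)

lemma speed_square_estimate:
  obtains K A where "0 \<le> A"
    and "\<And>k. (norm (u (Suc k), (\<gamma> * r) *\<^sub>R spin (Suc k)))\<^sup>2
              \<le> K + A * norm (u (Suc k), (\<gamma> * r) *\<^sub>R spin (Suc k))"
proof -
  define T where "T = crossing_time"
  define K where "K = energy 1 + (2 / m) * (F \<bullet> anchor 1) - T\<^sup>2 / (2 * m\<^sup>2) * (F \<bullet> F)"
  define A where "A = T / m * norm F + T / (m * \<gamma>) * norm F"
  have coeffs_nonneg: "0 \<le> T / m * norm F" "0 \<le> T / (m * \<gamma>) * norm F"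
    using crossing_time_pos m_pos \<gamma>_pos by (simp_all add: T_def)
  have "(norm (x, y))\<^sup>2 \<le> K + A * norm (x, y)"
    if "x = u (Suc k)" "y = (\<gamma> * r) *\<^sub>R spin (Suc k)" for k x y
  proof -
    have "(norm (x, y))\<^sup>2 = energy 1 + (2 / m) * (F \<bullet> a (Suc k))"
      using energy_eq[of k] by (simp add: norm_Pair energy_def that)
    also have "\<dots> = K - (T / m) * (F \<bullet> x) + (T / (m * \<gamma>)) * (F \<bullet> y)"
      using m_pos \<gamma>_pos unfolding a_Suc_eq_anchor K_def T_def that
      by (simp add: inner_diff_right inner_add_right field_simps power2_eq_square)
    also have "\<dots> \<le> K + (T / m * norm F) * norm x + (T / (m * \<gamma>) * norm F) * norm y"
    proof -
      have "- (F \<bullet> x) \<le> norm F * norm x" "F \<bullet> y \<le> norm F * norm y"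
        using Cauchy_Schwarz_ineq2[of F x] Cauchy_Schwarz_ineq2[of F y] by auto
      moreover have "0 \<le> T / m" "0 \<le> T / (m * \<gamma>)"
        using crossing_time_pos m_pos \<gamma>_pos by (simp_all add: T_def)
      ultimately show ?thesis
        using mult_left_mono by (smt (verit) mult.assoc mult_minus_right)
    qed
    also have "\<dots> \<le> K + A * norm (x, y)"
      using mult_left_mono[OF norm_fst_le coeffs_nonneg(1), of x y]
        mult_left_mono[OF norm_snd_le coeffs_nonneg(2), of y x]
      by (simp add: A_def distrib_right)
    finally show ?thesis .
  qed
  moreover have "0 \<le> A"
    using coeffs_nonneg by (simp add: A_def)
  ultimately show ?thesis
    using that by blast
qed

lemma velocity_bound:
  obtains C where "\<And>k. norm (u (Suc k)) \<le> C" "\<And>k. norm ((\<gamma> * r) *\<^sub>R spin (Suc k)) \<le> C"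
proof -
  obtain K A where "0 \<le> A"
    and "\<And>k. (norm (u (Suc k), (\<gamma> * r) *\<^sub>R spin (Suc k)))\<^sup>2
              \<le> K + A * norm (u (Suc k), (\<gamma> * r) *\<^sub>R spin (Suc k))"
    using speed_square_estimate by blast
  then have "norm (u (Suc k), (\<gamma> * r) *\<^sub>R spin (Suc k)) \<le> 1 + \<bar>K\<bar> + A" for k
    using le_of_square_le_linear by blast
  then show ?thesis
    using that norm_fst_le norm_snd_le order_trans by meson
qed

lemma position_bound:
  obtains B where "\<And>k. norm (a (Suc k)) \<le> B"
proof -
  obtain C where u_le: "\<And>k. norm (u (Suc k)) \<le> C"
    and spin_le: "\<And>k. norm ((\<gamma> * r) *\<^sub>R spin (Suc k)) \<le> C"
    using velocity_bound by blast
  define T where "T = crossing_time"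
  have T_pos: "T > 0"
    using crossing_time_pos by (simp add: T_def)
  have "norm (a (Suc k)) \<le> norm (anchor 1) + T / 2 * C + T / (2 * \<gamma>) * C + T\<^sup>2 / (4 * m) * norm F"
    for k
  proof -
    have "norm (a (Suc k)) \<le> norm (anchor 1) + norm ((T / 2) *\<^sub>R u (Suc k))
        + norm ((T / (2 * \<gamma>)) *\<^sub>R ((\<gamma> * r) *\<^sub>R spin (Suc k))) + norm ((T\<^sup>2 / (4 * m)) *\<^sub>R F)"
      unfolding a_Suc_eq_anchor T_def
      by (smt (verit) norm_triangle_ineq norm_triangle_ineq4)
    also have "\<dots> \<le> norm (anchor 1) + T / 2 * C + T / (2 * \<gamma>) * C + T\<^sup>2 / (4 * m) * norm F"
    proof -
      have "norm ((T / 2) *\<^sub>R u (Suc k)) \<le> T / 2 * C"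
        using mult_left_mono[OF u_le[of k], of "T / 2"] T_pos by simp
      moreover have "norm ((T / (2 * \<gamma>)) *\<^sub>R ((\<gamma> * r) *\<^sub>R spin (Suc k))) \<le> T / (2 * \<gamma>) * C"
        using mult_left_mono[OF spin_le[of k], of "T / (2 * \<gamma>)"] T_pos \<gamma>_pos r_pos
        by (simp add: abs_mult)
      ultimately show ?thesis
        using m_pos by simp
    qed
    finally show ?thesis .
  qed
  then show ?thesis using that by blast
qed

lemma bounded_flights:
  "bounded {flight m F (a k) (u k) \<tau> | k \<tau>. 0 \<le> \<tau> \<and> \<tau> \<le> t (Suc k) - t k}"
proof -
  obtain C where u_le: "\<And>k. norm (u (Suc k)) \<le> C"
    using velocity_bound by metis
  obtain B where a_le: "\<And>k. norm (a (Suc k)) \<le> B"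
    using position_bound by blast
  define T where "T = crossing_time"
  define D where "D = t 1 - t 0"
  define R where "R = max (norm (a 0) + D * norm (u 0) + D\<^sup>2 / (2 * m) * norm F)
                          (B + T * C + T\<^sup>2 / (2 * m) * norm F)"
  have flight_le: "norm (flight m F (a k) (u k) \<tau>) \<le> R"
    if "0 \<le> \<tau>" "\<tau> \<le> t (Suc k) - t k" for k \<tau>
  proof (cases k)
    case 0
    then show ?thesis
      using norm_flight_le[OF m_pos that, of F "a k" "u k"]
      unfolding R_def D_def by (simp add: le_max_iff_disj)
  next
    case (Suc j)
    then have "norm (flight m F (a k) (u k) \<tau>) \<le> norm (a k) + T * norm (u k) + T\<^sup>2 / (2 * m) * norm F"
      using norm_flight_le[OF m_pos that] slab_crossing[of j] by (simp add: T_def)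
    also have "\<dots> \<le> B + T * C + T\<^sup>2 / (2 * m) * norm F"
      using a_le[of j] u_le[of j] crossing_time_pos Suc
      by (simp add: T_def add_mono mult_left_mono)
    finally show ?thesis
      unfolding R_def by (rule order_trans[OF _ max.cobounded2])
  qed
  then show ?thesis
    unfolding bounded_iff by blast
qed

end

theorem theorem2p7:
  fixes m \<gamma> r \<alpha> \<beta> :: real and e F :: "real^'n"
    and t :: "nat \<Rightarrow> real" and a u :: "nat \<Rightarrow> real^'n" and U :: "nat \<Rightarrow> real^'n^'n"
  assumes "CARD('n) \<ge> 2"
    and "m > 0" and "r > 0" and "\<gamma> > 0"
    and "norm e = 1" and "\<alpha> < \<beta>"
    and "F \<bullet> e = 0"
    and "noslip_traj m F \<gamma> r e \<alpha> \<beta> t a u U"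
    and "u 0 \<bullet> e \<noteq> 0"
  shows "bounded {flight m F (a k) (u k) \<tau> | k \<tau>. 0 \<le> \<tau> \<and> \<tau> \<le> t (Suc k) - t k}"
proof -
  \<comment> \<open>the argument works in every dimension\<close>
  interpret transversal_slab_billiard m \<gamma> r \<alpha> \<beta> e F t a u U
    by unfold_locales (use assms in auto)
  show ?thesis
    by (rule bounded_flights)
qed

end
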